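(* Let $k\ge1$ and $a_k\in\mathbb{R}$. The sequence $\{a_k n^k \bmod 1\}_{n\ge0}$ in $\mathbb{T}$ has the repetition property if and only if $\liminf_{q\to\infty} q^{k-1}\langle a_k q\rangle = 0$ (with $q$ ranging over positive integers).
   Context: $\mathbb{T}=\mathbb{R}/\mathbb{Z}$ with metric $\mathrm{dist}(x,y)=\langle x-y\rangle$, where for $x\in\mathbb{R}$ (or its class in $\mathbb{T}$), $\langle x\rangle=\min\{|x-p|:p\in\mathbb{Z}\}$ is the distance to the nearest integer. $\mathbb{Z}_+=\{1,2,\ldots\}$. A sequence $\{\omega_n\}_{n\ge0}$ in a metric space $\Omega$ has the repetition property if for every $\varepsilon>0$ and $r \in \mathbb{Z}_+$ there exists $q \in \mathbb{Z}_+$ such that $\mathrm{dist}(\omega_n,\omega_{n+q}) < \varepsilon$ for $n = 0,1,\ldots, rq$. *)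

theory Defs
  imports "HOL-Analysis.Analysis"
begin

definition nint_dist :: "real \<Rightarrow> real" where
  "nint_dist x = (INF p\<in>(\<int>::real set). \<bar>x - p\<bar>)"

text \<open>The circle T = R/Z: a point is represented by any real representative;
  dist(x,y) = \<langle>x - y\<rangle>, which does not depend on the representatives.\<close>
definition torus_dist :: "real \<Rightarrow> real \<Rightarrow> real" where
  "torus_dist x y = nint_dist (x - y)"

definition repetition_property_T :: "(nat \<Rightarrow> real) \<Rightarrow> bool" where
  "repetition_property_T w \<longleftrightarrow>
     (\<forall>\<epsilon>>0. \<forall>r::nat. r \<ge> 1 \<longrightarrow>
        (\<exists>q::nat. q \<ge> 1 \<and> (\<forall>n\<le>r * q. torus_dist (w n) (w (n + q)) < \<epsilon>)))"

end

theory Submission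
  imports Defs
begin

(*
  Write <x> for the distance to the nearest integer.  Both directions rest on
  comparing the increments  a (n+q)^k - a n^k  with  <a q>:

  (<=) If q^(k-1) <a q> is small, then  a (n+q)^k - a n^k  is an integer multiple
       of  a q  with multiplier at most  k ((r+1) q)^(k-1)  for  n <= r q, so all
       increments are close to integers: this is the repetition property.
  (=>) Given the repetition property with r = k, the polynomial
       f(x) = a (x+q)^k - a x^k  (degree k-1, leading coefficient k q a) is close
       to integers at all points  i h  with  i <= k-1,  h <= q.  Taking the
       (k-1)-st finite difference with step h gives  <h^(k-1) z> small for
       z = k! q a  and all  1 <= h <= q;  a "sweep" over h then forces
       q^(k-1) <z>  to be small, i.e.  Q^(k-1) <a Q>  is small for  Q = k! q.
       Small values at arbitrarily large Q follow from a minimum argument.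
*)

lemma nint_dist_round: "nint_dist x = \<bar>x - of_int (round x)\<bar>"
  unfolding nint_dist_def
proof (rule cInf_eq_minimum)
  show "\<bar>x - of_int (round x)\<bar> \<in> (\<lambda>p. \<bar>x - p\<bar>) ` \<int>"
    by (auto simp: Ints_def)
next
  fix y assume "y \<in> (\<lambda>p. \<bar>x - p\<bar>) ` (\<int>::real set)"
  then obtain m where "y = \<bar>x - of_int m\<bar>" by (auto elim: Ints_cases)
  then show "\<bar>x - of_int (round x)\<bar> \<le> y" using round_diff_minimal by simp
qed

lemma nint_dist_le: "nint_dist x \<le> \<bar>x - of_int m\<bar>"
  by (simp add: nint_dist_round round_diff_minimal)

lemma nint_dist_nonneg: "nint_dist x \<ge> 0"
  by (simp add: nint_dist_round)

lemma nint_dist_le_abs: "nint_dist x \<le> \<bar>x\<bar>"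
  using nint_dist_le[of x 0] by simp

lemma nint_dist_add_int: "nint_dist (x + of_int m) = nint_dist x"
proof (rule antisym)
  show "nint_dist (x + of_int m) \<le> nint_dist x"
    using nint_dist_le[of "x + of_int m" "round x + m"] by (simp add: nint_dist_round)
  show "nint_dist x \<le> nint_dist (x + of_int m)"
    using nint_dist_le[of x "round (x + of_int m) - m"] by (simp add: nint_dist_round)
qed

lemma nint_dist_minus: "nint_dist (- x) = nint_dist x"
proof (rule antisym)
  show "nint_dist (- x) \<le> nint_dist x"
    using nint_dist_le[of "- x" "- round x"] by (simp add: nint_dist_round)
  show "nint_dist x \<le> nint_dist (- x)"
    using nint_dist_le[of x "- round (- x)"] by (simp add: nint_dist_round)
qed

lemma nint_dist_diff_le: "nint_dist (x - y) \<le> nint_dist x + nint_dist y"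
  using nint_dist_le[of "x - y" "round x - round y"] by (simp add: nint_dist_round)

lemma nint_dist_eq_abs:
  assumes "\<bar>x\<bar> \<le> 1/2"
  shows "nint_dist x = \<bar>x\<bar>"
proof -
  have "\<bar>x\<bar> \<le> \<bar>x - of_int m\<bar>" for m :: int
  proof (cases "m = 0")
    case False
    then have "\<bar>of_int m :: real\<bar> \<ge> 1" by linarith
    then show ?thesis using assms by linarith
  qed simp
  then show ?thesis
    using nint_dist_le_abs[of x] by (simp add: nint_dist_round antisym)
qed

lemma nint_dist_mult_nat_reduce:
  "nint_dist (real n * x) = nint_dist (real n * (x - of_int (round x)))"
proof -
  have "real n * x = real n * (x - of_int (round x)) + of_int (int n * round x)"
    by (simp add: algebra_simps)
  then show ?thesis by (metis nint_dist_add_int)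
qed

lemma nint_dist_mult_nat: "nint_dist (real n * x) \<le> real n * nint_dist x"
proof -
  have "nint_dist (real n * x) = nint_dist (real n * (x - of_int (round x)))"
    by (rule nint_dist_mult_nat_reduce)
  also have "\<dots> \<le> \<bar>real n * (x - of_int (round x))\<bar>"
    by (rule nint_dist_le_abs)
  also have "\<dots> = real n * nint_dist x"
    by (simp add: abs_mult nint_dist_round)
  finally show ?thesis .
qed

lemma torus_dist_frac: "torus_dist (frac u) (frac v) = nint_dist (v - u)"
proof -
  have "frac u - frac v = - (v - u) + of_int (\<lfloor>v\<rfloor> - \<lfloor>u\<rfloor>)"
    by (simp add: frac_def)
  then show ?thesis
    unfolding torus_dist_def by (metis nint_dist_add_int nint_dist_minus)
qed

text \<open>Inductively, |y| h^d <= eta forces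
  |y| (h+1)^d <= 2^d eta <= 1/2, so  <(h+1)^d z> = |y| (h+1)^d  and the hypothesis
  applies again.\<close>

lemma nint_dist_power_sweep:
  fixes z \<eta> :: real and d H :: nat
  assumes small: "\<And>h. 1 \<le> h \<Longrightarrow> h \<le> H \<Longrightarrow> nint_dist (real h ^ d * z) \<le> \<eta>"
    and eta: "2 ^ d * \<eta> \<le> 1/2" and H: "1 \<le> H"
  shows "real H ^ d * nint_dist z \<le> \<eta>"
proof -
  define y where "y = z - of_int (round z)"
  have reduce: "nint_dist (real h ^ d * z) = nint_dist (real h ^ d * y)" for h
    using nint_dist_mult_nat_reduce[of "h ^ d" z] by (simp add: y_def)
  from H have "real H ^ d * \<bar>y\<bar> \<le> \<eta>"
  proof (induction H rule: dec_induct)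
    case base
    then show ?case using small[of 1] H by (simp add: y_def nint_dist_round)
  next
    case (step h)
    have "real (Suc h) ^ d \<le> (2 * real h) ^ d"
      using step.hyps by (intro power_mono) auto
    then have "real (Suc h) ^ d * \<bar>y\<bar> \<le> 2 ^ d * (real h ^ d * \<bar>y\<bar>)"
      by (metis abs_ge_zero mult.assoc mult_right_mono power_mult_distrib)
    also have "\<dots> \<le> 2 ^ d * \<eta>" using step.IH by simp
    finally have "\<bar>real (Suc h) ^ d * y\<bar> \<le> 1/2" using eta by (simp add: abs_mult)
    then have "nint_dist (real (Suc h) ^ d * y) = real (Suc h) ^ d * \<bar>y\<bar>"
      by (simp add: nint_dist_eq_abs abs_mult)
    then show ?case using small[of "Suc h"] step.hyps reduce[of "Suc h"] by simp
  qed
  then show ?thesis by (simp add: y_def nint_dist_round)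
qed

definition poly_lead :: "nat \<Rightarrow> real \<Rightarrow> (real \<Rightarrow> real) \<Rightarrow> bool" where
  "poly_lead d c f \<longleftrightarrow> (\<exists>b. b d = c \<and> (\<forall>x. f x = (\<Sum>i\<le>d. b i * x ^ i)))"

lemma poly_lead_monomial: "poly_lead d c (\<lambda>x. c * x ^ d)"
proof -
  have "(\<Sum>i\<le>d. (if i = d then c else 0) * x ^ i) = (\<Sum>i\<le>d. if i = d then c * x ^ i else 0)"
    for x :: real
    by (rule sum.cong) auto
  then have "c * x ^ d = (\<Sum>i\<le>d. (if i = d then c else 0) * x ^ i)" for x :: real
    by (simp add: sum.delta')
  then show ?thesis unfolding poly_lead_def by (intro exI[of _ "\<lambda>i. if i = d then c else 0"]) simp
qed

lemma power_add_minus_power: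
  "(x + h) ^ i - x ^ i = (\<Sum>j<i. of_nat (i choose j) * x ^ j * (h::real) ^ (i - j))"
proof -
  have "(x + h) ^ i = (\<Sum>j\<le>i. of_nat (i choose j) * x ^ j * h ^ (i - j))"
    by (rule binomial_ring)
  also have "\<dots> = (\<Sum>j<i. of_nat (i choose j) * x ^ j * h ^ (i - j)) + x ^ i"
    by (simp add: lessThan_Suc_atMost[symmetric])
  finally show ?thesis by simp
qed

lemma poly_lead_difference:
  assumes "poly_lead (Suc d) c f"
  shows "poly_lead d (real (Suc d) * h * c) (\<lambda>x. f (x + h) - f x)"
proof -
  obtain b where b: "b (Suc d) = c" "\<And>x. f x = (\<Sum>i\<le>Suc d. b i * x ^ i)"
    using assms unfolding poly_lead_def by blast
  define t where "t i j x = (if j < i then b i * (of_nat (i choose j) * x ^ j * h ^ (i - j)) else 0)"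
    for i j x
  define b' where "b' j = (\<Sum>i\<in>{i\<in>{..Suc d}. j < i}. b i * of_nat (i choose j) * h ^ (i - j))"
    for j
  have "{i\<in>{..Suc d}. d < i} = {Suc d}" by auto
  then have lead: "b' d = real (Suc d) * h * c"
    by (simp add: b'_def b)
  have "f (x + h) - f x = (\<Sum>j\<le>d. b' j * x ^ j)" for x
  proof -
    have "f (x + h) - f x = (\<Sum>i\<le>Suc d. b i * ((x + h) ^ i - x ^ i))"
      by (simp add: b sum_subtractf right_diff_distrib)
    also have "\<dots> = (\<Sum>i\<le>Suc d. \<Sum>j\<le>d. t i j x)"
    proof (rule sum.cong[OF refl])
      fix i assume "i \<in> {..Suc d}"
      then have "{..<i} = {j\<in>{..d}. j < i}" by auto
      then show "b i * ((x + h) ^ i - x ^ i) = (\<Sum>j\<le>d. t i j x)"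
        unfolding power_add_minus_power sum_distrib_left t_def
        by (simp only:) (rule sum.inter_filter, simp)
    qed
    also have "\<dots> = (\<Sum>j\<le>d. \<Sum>i\<le>Suc d. t i j x)"
      by (rule sum.swap)
    also have "\<dots> = (\<Sum>j\<le>d. b' j * x ^ j)"
    proof (rule sum.cong[OF refl])
      fix j
      have "b' j * x ^ j = (\<Sum>i\<in>{i\<in>{..Suc d}. j < i}. b i * (of_nat (i choose j) * x ^ j * h ^ (i - j)))"
        unfolding b'_def sum_distrib_right by (rule sum.cong) (auto simp: mult_ac)
      also have "\<dots> = (\<Sum>i\<le>Suc d. t i j x)"
        unfolding t_def by (rule sum.inter_filter) simp
      finally show "(\<Sum>i\<le>Suc d. t i j x) = b' j * x ^ j" by simp
    qed
    finally show ?thesis .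
  qed
  then show ?thesis unfolding poly_lead_def using lead by blast
qed

lemma poly_lead_difference_bound:
  assumes "poly_lead d c f" and "\<And>i. i \<le> d \<Longrightarrow> nint_dist (f (x + real i * h)) \<le> \<eta>"
  shows "nint_dist (fact d * h ^ d * c) \<le> 2 ^ d * \<eta>"
  using assms
proof (induction d arbitrary: c f \<eta>)
  case 0
  then obtain b where "b 0 = c" "\<And>x. f x = (\<Sum>i\<le>0. b i * x ^ i)"
    unfolding poly_lead_def by blast
  then show ?case using "0.prems"(2)[of 0] by simp
next
  case (Suc d)
  let ?g = "\<lambda>x. f (x + h) - f x"
  have "nint_dist (?g (x + real i * h)) \<le> 2 * \<eta>" if "i \<le> d" for i
  proof -
    have "nint_dist (f (x + real (Suc i) * h) - f (x + real i * h)) \<le> 2 * \<eta>"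
      using Suc.prems(2)[of i] Suc.prems(2)[of "Suc i"] that
        nint_dist_diff_le[of "f (x + real (Suc i) * h)" "f (x + real i * h)"]
      by simp
    moreover have step: "x + real i * h + h = x + real (Suc i) * h" by (simp add: algebra_simps)
    ultimately show ?thesis by (simp only: step)
  qed
  from Suc.IH[OF poly_lead_difference[OF Suc.prems(1)] this] show ?case
    by (simp add: algebra_simps)
qed

lemma liminf_ereal_eq_0_iff:
  fixes X :: "nat \<Rightarrow> real"
  assumes nonneg: "\<And>n. X n \<ge> 0"
  shows "liminf (\<lambda>n. ereal (X n)) = 0 \<longleftrightarrow> (\<forall>\<epsilon>>0. \<exists>\<^sub>F n in sequentially. X n < \<epsilon>)"
proof -
  have "0 \<le> liminf (\<lambda>n. ereal (X n))"
    by (intro Liminf_bounded) (simp add: nonneg)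
  moreover have "0 < liminf (\<lambda>n. ereal (X n)) \<longleftrightarrow>
    (\<exists>\<epsilon>>0. \<forall>\<^sub>F n in sequentially. \<epsilon> \<le> X n)"
  proof
    assume "0 < liminf (\<lambda>n. ereal (X n))"
    then obtain \<epsilon> where \<epsilon>: "0 < ereal \<epsilon>" "ereal \<epsilon> < liminf (\<lambda>n. ereal (X n))"
      using ereal_dense2 by blast
    from \<epsilon>(2) have "\<forall>\<^sub>F n in sequentially. ereal \<epsilon> < ereal (X n)"
      by (rule less_LiminfD)
    then show "\<exists>\<epsilon>>0. \<forall>\<^sub>F n in sequentially. \<epsilon> \<le> X n"
      using \<epsilon>(1) by (intro exI[of _ \<epsilon>]) (auto elim: eventually_mono)
  next
    assume "\<exists>\<epsilon>>0. \<forall>\<^sub>F n in sequentially. \<epsilon> \<le> X n"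
    then obtain \<epsilon> where "\<epsilon> > 0" "\<forall>\<^sub>F n in sequentially. ereal \<epsilon> \<le> ereal (X n)"
      by auto
    then have "0 < ereal \<epsilon>" "ereal \<epsilon> \<le> liminf (\<lambda>n. ereal (X n))"
      by (auto intro: Liminf_bounded)
    then show "0 < liminf (\<lambda>n. ereal (X n))" by (rule order_less_le_trans)
  qed
  moreover have "(\<forall>\<epsilon>>0. \<exists>\<^sub>F n in sequentially. X n < \<epsilon>) \<longleftrightarrow>
    \<not> (\<exists>\<epsilon>>0. \<forall>\<^sub>F n in sequentially. \<epsilon> \<le> X n)"
    unfolding frequently_def not_less by (meson not_le)
  ultimately show ?thesis by auto
qed

text \<open>Key estimate for the converse direction:  a (n+q)^k - a n^k  is an integer multiple
  S (a q) with  S <= k ((r+1) q)^(k-1)  whenever  n <= r q.\<close>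

lemma power_increment_nint_dist:
  fixes a :: real and n q r k :: nat
  assumes n: "n \<le> r * q"
  shows "nint_dist (a * real (n + q) ^ k - a * real n ^ k)
           \<le> real k * real (Suc r) ^ (k - 1) * (real q ^ (k - 1) * nint_dist (a * real q))"
proof -
  define S :: nat where "S = (\<Sum>i<k. n ^ (k - Suc i) * (n + q) ^ i)"
  have "real (n + q) ^ k - real n ^ k = (real (n + q) - real n) * real S"
    using power_diff_sumr2[of "real (n + q)" k "real n"] by (simp add: S_def)
  then have "a * real (n + q) ^ k - a * real n ^ k = real S * (a * real q)"
    by (simp add: right_diff_distrib[symmetric])
  then have "nint_dist (a * real (n + q) ^ k - a * real n ^ k) \<le> real S * nint_dist (a * real q)"
    by (simp add: nint_dist_mult_nat)
  also have "\<dots> \<le> real k * real (Suc r) ^ (k - 1) * (real q ^ (k - 1) * nint_dist (a * real q))"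
  proof -
    have "S \<le> (\<Sum>i<k. (n + q) ^ (k - 1))"
      unfolding S_def
    proof (rule sum_mono)
      fix i assume i: "i \<in> {..<k}"
      have "n ^ (k - Suc i) * (n + q) ^ i \<le> (n + q) ^ (k - Suc i) * (n + q) ^ i"
        by (intro mult_right_mono power_mono) auto
      also have "\<dots> = (n + q) ^ (k - 1)" using i by (simp add: power_add[symmetric])
      finally show "n ^ (k - Suc i) * (n + q) ^ i \<le> (n + q) ^ (k - 1)" .
    qed
    also have "\<dots> \<le> k * (Suc r * q) ^ (k - 1)"
      using n by (simp add: power_mono)
    also have "\<dots> = k * Suc r ^ (k - 1) * q ^ (k - 1)"
      by (simp only: power_mult_distrib mult.assoc)
    finally have "real S \<le> real k * real (Suc r) ^ (k - 1) * real q ^ (k - 1)"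
      by (metis of_nat_le_iff of_nat_mult of_nat_power)
    from mult_right_mono[OF this nint_dist_nonneg[of "a * real q"]]
    show ?thesis by (simp add: mult_ac)
  qed
  finally show ?thesis .
qed

lemma frequently_small_imp_repetition:
  fixes a :: real and k :: nat
  assumes k: "k \<ge> 1"
    and small: "\<forall>\<epsilon>>0. \<exists>\<^sub>F q in sequentially. real q ^ (k - 1) * nint_dist (a * real q) < \<epsilon>"
  shows "repetition_property_T (\<lambda>n. frac (a * real n ^ k))"
  unfolding repetition_property_T_def
proof (intro allI impI)
  fix \<epsilon> :: real and r :: nat
  assume "\<epsilon> > 0"
  define C where "C = real k * real (Suc r) ^ (k - 1)"
  have C: "C > 0" using k by (simp add: C_def)
  then have "\<exists>\<^sub>F q in sequentially. real q ^ (k - 1) * nint_dist (a * real q) < \<epsilon> / C"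
    using small \<open>\<epsilon> > 0\<close> by simp
  then obtain q where q: "q \<ge> 1" "real q ^ (k - 1) * nint_dist (a * real q) < \<epsilon> / C"
    unfolding frequently_sequentially by blast
  have "torus_dist (frac (a * real n ^ k)) (frac (a * real (n + q) ^ k)) < \<epsilon>"
    if "n \<le> r * q" for n
  proof -
    have "torus_dist (frac (a * real n ^ k)) (frac (a * real (n + q) ^ k))
          \<le> C * (real q ^ (k - 1) * nint_dist (a * real q))"
      using power_increment_nint_dist[OF that] by (simp add: torus_dist_frac C_def)
    also have "\<dots> < \<epsilon>" using q(2) C by (simp add: field_simps)
    finally show ?thesis .
  qed
  then show "\<exists>q\<ge>1. \<forall>n\<le>r * q. torus_dist (frac (a * real n ^ k)) (frac (a * real (n + q) ^ k)) < \<epsilon>"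
    using q(1) by blast
qed

lemma repetition_imp_small_value:
  fixes a \<eta> :: real and d :: nat
  assumes rep: "repetition_property_T (\<lambda>n. frac (a * real n ^ Suc d))"
    and eta: "\<eta> > 0" "2 ^ d * \<eta> \<le> 1/2"
  shows "\<exists>Q\<ge>1. real Q ^ d * nint_dist (a * real Q) \<le> fact (Suc d) ^ d * \<eta>"
proof -
  define \<epsilon> where "\<epsilon> = \<eta> / 2 ^ d"
  have "\<epsilon> > 0" using eta by (simp add: \<epsilon>_def)
  then obtain q :: nat where q: "q \<ge> 1"
    "\<And>n. n \<le> Suc d * q \<Longrightarrow> torus_dist (frac (a * real n ^ Suc d)) (frac (a * real (n + q) ^ Suc d)) < \<epsilon>"
    using rep unfolding repetition_property_T_def by (metis le_add1 plus_1_eq_Suc)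
  define f where "f = (\<lambda>x. a * (x + real q) ^ Suc d - a * x ^ Suc d)"
  have lead: "poly_lead d (real (Suc d) * real q * a) f"
    using poly_lead_difference[OF poly_lead_monomial[of "Suc d" a], of "real q"]
    by (simp add: f_def mult.commute)
  define z where "z = real (fact (Suc d) * q) * a"
  have "nint_dist (real h ^ d * z) \<le> \<eta>" if h: "1 \<le> h" "h \<le> q" for h
  proof -
    have "nint_dist (f (0 + real i * real h)) \<le> \<epsilon>" if i: "i \<le> d" for i
    proof -
      have "i * h \<le> Suc d * q" using i h by (intro mult_mono) auto
      from q(2)[OF this] show ?thesis by (simp add: f_def torus_dist_frac add.commute)
    qed
    from poly_lead_difference_bound[OF lead this]
    show ?thesis by (simp add: z_def \<epsilon>_def fact_Suc algebra_simps)
  qed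
  then have "real q ^ d * nint_dist z \<le> \<eta>"
    using nint_dist_power_sweep eta(2) q(1) by blast
  then have "fact (Suc d) ^ d * (real q ^ d * nint_dist z) \<le> fact (Suc d) ^ d * \<eta>"
    by (rule mult_left_mono) simp
  moreover have "real (fact (Suc d) * q) ^ d = fact (Suc d) ^ d * real q ^ d"
    by (simp only: of_nat_mult of_nat_fact power_mult_distrib)
  ultimately have "real (fact (Suc d) * q) ^ d * nint_dist z \<le> fact (Suc d) ^ d * \<eta>"
    by (simp only: mult.assoc)
  moreover have "fact (Suc d) * q \<ge> 1"
    using q(1) by (simp add: Suc_le_eq)
  ultimately show ?thesis
    by (intro exI[of _ "fact (Suc d) * q"]) (simp add: z_def mult.commute)
qed

text \<open>If  q^d <a q>  takes arbitrarily small values at positive integers, then it does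
  so for arbitrarily large q: either <a q> = 0 for some q, and then for all its
  multiples, or <a q> is bounded below on  1..N,  so very small values occur only
  beyond N.\<close>

lemma small_values_frequently:
  fixes a :: real and d :: nat
  assumes small: "\<And>\<epsilon>. \<epsilon> > 0 \<Longrightarrow> \<exists>q\<ge>1. real q ^ d * nint_dist (a * real q) < \<epsilon>"
    and "\<epsilon> > 0"
  shows "\<exists>\<^sub>F q in sequentially. real q ^ d * nint_dist (a * real q) < \<epsilon>"
  unfolding frequently_sequentially
proof
  fix N :: nat
  show "\<exists>q\<ge>N. real q ^ d * nint_dist (a * real q) < \<epsilon>"
  proof (cases "\<exists>q\<ge>1. nint_dist (a * real q) = 0")
    case True
    then obtain q :: nat where q: "q \<ge> 1" "nint_dist (a * real q) = 0" by blast
    have "a * real (Suc N * q) = real (Suc N) * (a * real q)" by (simp add: algebra_simps)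
    then have "nint_dist (a * real (Suc N * q)) \<le> real (Suc N) * nint_dist (a * real q)"
      using nint_dist_mult_nat[of "Suc N" "a * real q"] by (simp only:)
    then have "nint_dist (a * real (Suc N * q)) = 0"
      using q(2) nint_dist_nonneg[of "a * real (Suc N * q)"] by simp
    moreover have "Suc N * q \<ge> N" using q(1) mult_le_mono2[of 1 q "Suc N"] by simp
    ultimately show ?thesis using \<open>\<epsilon> > 0\<close> by (intro exI[of _ "Suc N * q"]) simp
  next
    case False
    then have pos: "nint_dist (a * real j) > 0" if "j \<ge> 1" for j
      using that nint_dist_nonneg[of "a * real j"] by force
    define S where "S = insert \<epsilon> ((\<lambda>j. nint_dist (a * real j)) ` {1..N})"
    have "finite S" by (simp add: S_def)
    then have "Min S > 0" using \<open>\<epsilon> > 0\<close> by (auto simp: S_def pos)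
    then obtain q :: nat where q: "q \<ge> 1" "real q ^ d * nint_dist (a * real q) < Min S"
      using small by blast
    have "nint_dist (a * real q) \<le> real q ^ d * nint_dist (a * real q)"
      using q(1) nint_dist_nonneg[of "a * real q"] by (simp add: mult_le_cancel_right1)
    then have "nint_dist (a * real q) < Min S" using q(2) by linarith
    then have "q > N" using q(1) \<open>finite S\<close> by (force simp: S_def)
    moreover have "Min S \<le> \<epsilon>" using \<open>finite S\<close> by (simp add: S_def)
    ultimately show ?thesis using q(2) by (intro exI[of _ q]) simp
  qed
qed

lemma repetition_imp_frequently_small:
  fixes a :: real and d :: nat
  assumes rep: "repetition_property_T (\<lambda>n. frac (a * real n ^ Suc d))"
  shows "\<forall>\<epsilon>>0. \<exists>\<^sub>F q in sequentially. real q ^ d * nint_dist (a * real q) < \<epsilon>"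
proof (intro allI impI small_values_frequently)
  fix \<epsilon> :: real assume "\<epsilon> > 0"
  define F :: real where "F = fact (Suc d) ^ d"
  have F: "F \<ge> 1" unfolding F_def by (intro one_le_power fact_ge_1)
  define \<eta> where "\<eta> = min (\<epsilon> / (2 * F)) (1 / (2 * 2 ^ d))"
  have "\<eta> > 0" "2 ^ d * \<eta> \<le> 1/2"
    using \<open>\<epsilon> > 0\<close> F by (auto simp: \<eta>_def min_def field_simps)
  then obtain q where q: "q \<ge> 1" "real q ^ d * nint_dist (a * real q) \<le> F * \<eta>"
    using repetition_imp_small_value[OF rep] by (auto simp: F_def)
  have "F * \<eta> < \<epsilon>"
    using \<open>\<epsilon> > 0\<close> F by (auto simp: \<eta>_def min_def field_simps)
  then show "\<exists>q\<ge>1. real q ^ d * nint_dist (a * real q) < \<epsilon>"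
    using q by (intro exI[of _ q]) simp
qed

theorem theorem3p5:
  fixes k :: nat and a :: real
  assumes "k \<ge> 1"
  shows "repetition_property_T (\<lambda>n. frac (a * real n ^ k)) \<longleftrightarrow>
         liminf (\<lambda>m. ereal (real (Suc m) ^ (k - 1) * nint_dist (a * real (Suc m)))) = 0"
proof -
  obtain d where k: "k = Suc d" using assms by (cases k) auto
  define X where "X q = real q ^ d * nint_dist (a * real q)" for q
  have "liminf (\<lambda>m. ereal (X (Suc m))) = 0 \<longleftrightarrow>
    (\<forall>\<epsilon>>0. \<exists>\<^sub>F m in sequentially. X (Suc m) < \<epsilon>)"
    by (rule liminf_ereal_eq_0_iff) (simp add: X_def nint_dist_nonneg)
  also have "\<dots> \<longleftrightarrow> (\<forall>\<epsilon>>0. \<exists>\<^sub>F q in sequentially. X q < \<epsilon>)"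
    using eventually_sequentially_Suc[of "\<lambda>q. \<not> X q < _"] by (simp add: frequently_def)
  also have "\<dots> \<longleftrightarrow> repetition_property_T (\<lambda>n. frac (a * real n ^ k))"
    using repetition_imp_frequently_small frequently_small_imp_repetition[OF assms]
    unfolding X_def k by auto
  finally show ?thesis by (simp add: X_def k)
qed

end
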